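(* Let $\mathbb{K}$ be a field of characteristic $0$, let $V$ be a $\mathbb{K}$-vector space of dimension $n\ge d$, and let $\mathcal{P}_d$ be a homogeneous polynomial functor of degree $d$. Then the functor $\Omega_{V,d}(\mathcal{P}_d):\mathbf{Vec}\to\mathbf{Vec}$ is a homogeneous polynomial functor of degree $d$.
   Context: $\mathbf{Vec}$ is the category of finite-dimensional $\mathbb{K}$-spaces. A functor $\mathcal{P}:\mathbf{Vec}\to\mathbf{Vec}$ is a polynomial functor if each map $\operatorname{Hom}(X,Y)\to\operatorname{Hom}(\mathcal{P}(X),\mathcal{P}(Y))$ is polynomial, homogeneous of degree $d$ if $\mathcal{P}(\lambda h)=\lambda^d\mathcal{P}(h)$. Definition: $\Omega_{V,d}(\mathcal{P}_d)(W)=\operatorname{Hom}_{\mathrm{GL}(V)}\bigl(\bigwedge^dV,\mathcal{P}_d(W\otimes V)\bigr)$, where $\mathrm{GL}(V)$ acts on $W\otimes V$ by $g\mapsto\mathrm{id}_W\otimes g$ and on $\mathcal{P}_d(W\otimes V)$ through $\mathcal{P}_d$; a linear map $h:W\to W'$ is sent to post-composition with $\mathcal{P}_d(h\otimes\mathrm{id}_V)$. (I.e. $\Omega_{V,d}(\mathcal{P}_d)=\mathcal{H}_{V,d}\circ\mathcal{P}_{V,d}\circ\mathcal{T}_V$ with $\mathcal{T}_V=-\otimes V$ and $\mathcal{H}_{V,d}=\operatorname{Hom}_{\mathrm{GL}(V)}(\bigwedge^dV,-)$.) *)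

theory Defs
  imports "Jordan_Normal_Form.Determinant" "Jordan_Normal_Form.DL_Submatrix"
begin

text \<open>We work on the skeleton of Vec: objects are the spaces K^m (m :: nat), and a
linear map K^m -> K^k is a k x m matrix (Jordan_Normal_Form matrices).\<close>

inductive poly_fun :: "nat \<Rightarrow> nat \<Rightarrow> ('a::comm_ring_1 mat \<Rightarrow> 'a) \<Rightarrow> bool"
  for k m :: nat where
  pf_const: "poly_fun k m (\<lambda>h. c)"
| pf_entry: "i < k \<Longrightarrow> j < m \<Longrightarrow> poly_fun k m (\<lambda>h. h $$ (i, j))"
| pf_add: "poly_fun k m f \<Longrightarrow> poly_fun k m g \<Longrightarrow> poly_fun k m (\<lambda>h. f h + g h)"
| pf_mult: "poly_fun k m f \<Longrightarrow> poly_fun k m g \<Longrightarrow> poly_fun k m (\<lambda>h. f h * g h)"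

definition polynomial_on :: "nat \<Rightarrow> nat \<Rightarrow> ('a::comm_ring_1 mat \<Rightarrow> 'a) \<Rightarrow> bool" where
  "polynomial_on k m f \<longleftrightarrow> (\<exists>p. poly_fun k m p \<and> (\<forall>h \<in> carrier_mat k m. f h = p h))"

text \<open>A homogeneous polynomial functor of degree d, with P(K^m) = K^(Pdim m)
 and P(h) = Pmat h (a Pdim k x Pdim m matrix for h : K^m -> K^k).\<close>
definition hom_poly_functor :: "(nat \<Rightarrow> nat) \<Rightarrow> ('a::comm_ring_1 mat \<Rightarrow> 'a mat) \<Rightarrow> nat \<Rightarrow> bool" where
  "hom_poly_functor Pdim Pmat d \<longleftrightarrow>
     (\<forall>k m h. h \<in> carrier_mat k m \<longrightarrow> Pmat h \<in> carrier_mat (Pdim k) (Pdim m)) \<and>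
     (\<forall>m. Pmat (1\<^sub>m m) = 1\<^sub>m (Pdim m)) \<and>
     (\<forall>k l m g h. g \<in> carrier_mat k l \<longrightarrow> h \<in> carrier_mat l m \<longrightarrow> Pmat (g * h) = Pmat g * Pmat h) \<and>
     (\<forall>k m i j. i < Pdim k \<longrightarrow> j < Pdim m \<longrightarrow> polynomial_on k m (\<lambda>h. Pmat h $$ (i, j))) \<and>
     (\<forall>k m c h. h \<in> carrier_mat k m \<longrightarrow> Pmat (c \<cdot>\<^sub>m h) = (c ^ d) \<cdot>\<^sub>m Pmat h)"

text \<open>A homogeneous polynomial functor of degree d whose value on K^m is a linear
 subspace S m of the space of R m x C m matrices, and whose value on a morphism h is
 the (linear) map M h.\<close>
definition hom_poly_subfunctor ::
  "(nat \<Rightarrow> nat) \<Rightarrow> (nat \<Rightarrow> nat) \<Rightarrow> (nat \<Rightarrow> 'a::comm_ring_1 mat set) \<Rightarrow> ('a mat \<Rightarrow> 'a mat \<Rightarrow> 'a mat) \<Rightarrow> nat \<Rightarrow> bool" where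
  "hom_poly_subfunctor R C S M d \<longleftrightarrow>
     (\<forall>m. S m \<subseteq> carrier_mat (R m) (C m) \<and> 0\<^sub>m (R m) (C m) \<in> S m \<and>
          (\<forall>x \<in> S m. \<forall>y \<in> S m. x + y \<in> S m) \<and> (\<forall>c. \<forall>x \<in> S m. c \<cdot>\<^sub>m x \<in> S m)) \<and>
     (\<forall>k m h. h \<in> carrier_mat k m \<longrightarrow>
        (\<forall>x \<in> S m. M h x \<in> S k) \<and>
        (\<forall>x \<in> S m. \<forall>y \<in> S m. M h (x + y) = M h x + M h y) \<and>
        (\<forall>c. \<forall>x \<in> S m. M h (c \<cdot>\<^sub>m x) = c \<cdot>\<^sub>m M h x)) \<and>
     (\<forall>m. \<forall>x \<in> S m. M (1\<^sub>m m) x = x) \<and>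
     (\<forall>k l m g h. g \<in> carrier_mat k l \<longrightarrow> h \<in> carrier_mat l m \<longrightarrow>
        (\<forall>x \<in> S m. M (g * h) x = M g (M h x))) \<and>
     (\<forall>k m. \<forall>x \<in> S m. \<forall>i j. i < R k \<longrightarrow> j < C k \<longrightarrow> polynomial_on k m (\<lambda>h. M h x $$ (i, j))) \<and>
     (\<forall>k m c h. h \<in> carrier_mat k m \<longrightarrow> (\<forall>x \<in> S m. M (c \<cdot>\<^sub>m h) x = (c ^ d) \<cdot>\<^sub>m M h x))"

text \<open>Kronecker product: for A : K^a -> K^b and B : K^c -> K^e, kron A B : K^a (x) K^c -> K^b (x) K^e,
 where the basis vector e_i (x) f_j of K^p (x) K^q = K^(p*q) has index i*q + j.\<close>
definition kron :: "'a::times mat \<Rightarrow> 'a mat \<Rightarrow> 'a mat" where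
  "kron A B = mat (dim_row A * dim_row B) (dim_col A * dim_col B)
     (\<lambda>(i, j). A $$ (i div dim_row B, j div dim_col B) * B $$ (i mod dim_row B, j mod dim_col B))"

text \<open>Basis of the d-th exterior power of K^n: e_{i1} ^ ... ^ e_{id} with i1 < ... < id,
 listed in lexicographic order.\<close>
definition wedge_idx :: "nat \<Rightarrow> nat \<Rightarrow> nat list list" where
  "wedge_idx n d = filter (sorted_wrt (<)) (List.n_lists d [0..<n])"

text \<open>Matrix of the induced map on the d-th exterior power (d x d minors).\<close>
definition wedge_mat :: "nat \<Rightarrow> 'a::comm_ring_1 mat \<Rightarrow> 'a mat" where
  "wedge_mat d g = (let I = wedge_idx (dim_row g) d; J = wedge_idx (dim_col g) d in
     mat (length I) (length J) (\<lambda>(a, b). det (submatrix g (set (I ! a)) (set (J ! b)))))"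

text \<open>Omega_{V,d}(P)(K^m) = Hom_{GL(V)}(wedge^d V, P(K^m (x) V)) for V = K^n, realised as the
 Pdim(m*n) x binom(n,d) matrices x with P(id_W (x) g) x = x (wedge^d g) for all g in GL(V).\<close>
definition Omega_obj :: "(nat \<Rightarrow> nat) \<Rightarrow> ('a::comm_ring_1 mat \<Rightarrow> 'a mat) \<Rightarrow> nat \<Rightarrow> nat \<Rightarrow> nat \<Rightarrow> 'a mat set" where
  "Omega_obj Pdim Pmat n d m =
     {x \<in> carrier_mat (Pdim (m * n)) (length (wedge_idx n d)).
        \<forall>g \<in> carrier_mat n n. invertible_mat g \<longrightarrow>
          Pmat (kron (1\<^sub>m m) g) * x = x * wedge_mat d g}"

definition Omega_mor :: "('a::comm_ring_1 mat \<Rightarrow> 'a mat) \<Rightarrow> nat \<Rightarrow> 'a mat \<Rightarrow> 'a mat \<Rightarrow> 'a mat" where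
  "Omega_mor Pmat n h x = Pmat (kron h (1\<^sub>m n)) * x"

end

theory Submission
  imports Defs
begin

(* Omega(P)(W) is the solution space of the linear equations P(id_W (x) g) x = x (wedge^d g),
   g in GL(V), so it is a linear subspace.  Omega(h) is post-composition with P(h (x) id_V), and
   h (x) id_V commutes with id (x) g because both composites equal h (x) g; applying the functor P
   shows that Omega(h) maps solutions to solutions.  Functoriality, polynomiality and homogeneity
   of degree d are then inherited from P, because h \<mapsto> h (x) id_V is multiplicative, linear and
   has polynomial entries. *)

lemma sum_lessThan_mult:
  fixes q s :: nat
  shows "(\<Sum>l<q * s. f l) = (\<Sum>a<q. \<Sum>b<s. f (a * s + b) :: 'b::comm_monoid_add)"
proof -
  have "sum f {a * s..<a * s + s} = (\<Sum>b<s. f (a * s + b))" for a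
    using sum.shift_bounds_nat_ivl[of f 0 "a * s" s] by (simp add: atLeast0LessThan add.commute)
  then show ?thesis by (simp add: sum.nat_group[symmetric])
qed

lemma dim_kron [simp]:
  "dim_row (kron A B) = dim_row A * dim_row B"
  "dim_col (kron A B) = dim_col A * dim_col B"
  unfolding kron_def by simp_all

lemma kron_carrier_mat [simp]:
  "A \<in> carrier_mat p q \<Longrightarrow> B \<in> carrier_mat r s \<Longrightarrow> kron A B \<in> carrier_mat (p * r) (q * s)"
  unfolding carrier_mat_def by simp

lemma index_kron:
  "i < dim_row A * dim_row B \<Longrightarrow> j < dim_col A * dim_col B \<Longrightarrow>
   kron A B $$ (i, j) = A $$ (i div dim_row B, j div dim_col B) * B $$ (i mod dim_row B, j mod dim_col B)"
  unfolding kron_def by simp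

lemma kron_mult:
  fixes A :: "'a::comm_ring_1 mat"
  assumes A: "A \<in> carrier_mat p q" and B: "B \<in> carrier_mat r s"
    and C: "C \<in> carrier_mat q t" and D: "D \<in> carrier_mat s u"
  shows "kron A B * kron C D = kron (A * C) (B * D)"
proof (rule eq_matI)
  fix i j assume "i < dim_row (kron (A * C) (B * D))" and "j < dim_col (kron (A * C) (B * D))"
  then have i: "i < p * r" and j: "j < t * u" using A B C D by auto
  then have "0 < r" "0 < u" "i div r < p" "j div u < t"
    by (auto intro!: gr0I simp: less_mult_imp_div_less)
  have "(kron A B * kron C D) $$ (i, j) = (\<Sum>l<q * s. kron A B $$ (i, l) * kron C D $$ (l, j))"
    using A B C D i j by (simp add: scalar_prod_def lessThan_atLeast0)
  also have "\<dots> = (\<Sum>a<q. \<Sum>b<s. (A $$ (i div r, a) * C $$ (a, j div u)) *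
                                   (B $$ (i mod r, b) * D $$ (b, j mod u)))"
    unfolding sum_lessThan_mult
  proof (intro sum.cong refl)
    fix a b assume "a \<in> {..<q}" and "b \<in> {..<s}"
    then have "a * s + b < q * s" "(a * s + b) div s = a" "(a * s + b) mod s = b"
      using mult_le_mono1[of "Suc a" q s] by auto
    then show "kron A B $$ (i, a * s + b) * kron C D $$ (a * s + b, j) =
        (A $$ (i div r, a) * C $$ (a, j div u)) * (B $$ (i mod r, b) * D $$ (b, j mod u))"
      using A B C D i j by (simp add: index_kron ac_simps)
  qed
  also have "\<dots> = (\<Sum>a<q. A $$ (i div r, a) * C $$ (a, j div u)) *
                  (\<Sum>b<s. B $$ (i mod r, b) * D $$ (b, j mod u))"
    by (simp add: sum_product)
  also have "\<dots> = kron (A * C) (B * D) $$ (i, j)"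
    using A B C D i j \<open>0 < r\<close> \<open>0 < u\<close> \<open>i div r < p\<close> \<open>j div u < t\<close>
    by (simp add: index_kron scalar_prod_def lessThan_atLeast0)
  finally show "(kron A B * kron C D) $$ (i, j) = kron (A * C) (B * D) $$ (i, j)" .
qed (use assms in auto)

lemma kron_one_mat: "kron (1\<^sub>m m) (1\<^sub>m n) = (1\<^sub>m (m * n) :: 'a::comm_ring_1 mat)"
proof (rule eq_matI)
  fix i j assume "i < dim_row (1\<^sub>m (m * n) :: 'a mat)" "j < dim_col (1\<^sub>m (m * n) :: 'a mat)"
  then have i: "i < m * n" and j: "j < m * n" by auto
  then have "0 < n" by (cases n) auto
  moreover have "i div n = j div n \<and> i mod n = j mod n \<longleftrightarrow> i = j"
    by (metis div_mult_mod_eq)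
  ultimately show "kron (1\<^sub>m m) (1\<^sub>m n) $$ (i, j) = (1\<^sub>m (m * n) :: 'a mat) $$ (i, j)"
    using i j by (auto simp: index_kron less_mult_imp_div_less)
qed auto

lemma kron_smult_left: "kron (c \<cdot>\<^sub>m A) B = c \<cdot>\<^sub>m kron A (B :: 'a::comm_ring_1 mat)"
  by (rule eq_matI) (auto simp: index_kron less_mult_imp_div_less)

lemma kron_one_mat_commute:
  fixes h g :: "'a::comm_ring_1 mat"
  assumes "h \<in> carrier_mat k m" and "g \<in> carrier_mat n n"
  shows "kron (1\<^sub>m k) g * kron h (1\<^sub>m n) = kron h (1\<^sub>m n) * kron (1\<^sub>m m) g"
  using kron_mult[OF one_carrier_mat assms(2) assms(1) one_carrier_mat]
    kron_mult[OF assms(1) one_carrier_mat one_carrier_mat assms(2)] assms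
  by simp

lemma intertwines_add:
  fixes A :: "'a::comm_ring_1 mat"
  assumes A: "A \<in> carrier_mat r r" and B: "B \<in> carrier_mat c c"
    and x: "x \<in> carrier_mat r c" and y: "y \<in> carrier_mat r c"
    and "A * x = x * B" and "A * y = y * B"
  shows "A * (x + y) = (x + y) * B"
  using assms by (simp add: mult_add_distrib_mat[OF A x y] add_mult_distrib_mat[OF x y B])

lemma intertwines_smult:
  fixes A :: "'a::comm_ring_1 mat"
  assumes A: "A \<in> carrier_mat r r" and B: "B \<in> carrier_mat c c"
    and x: "x \<in> carrier_mat r c" and "A * x = x * B"
  shows "A * (a \<cdot>\<^sub>m x) = (a \<cdot>\<^sub>m x) * B"
  using assms by (simp add: mult_smult_distrib[OF A x] mult_smult_assoc_mat[OF x B])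

lemma polynomial_on_cong:
  "polynomial_on k m f \<Longrightarrow> (\<And>h. h \<in> carrier_mat k m \<Longrightarrow> f h = g h) \<Longrightarrow> polynomial_on k m g"
  unfolding polynomial_on_def by metis

lemma polynomial_on_const: "polynomial_on k m (\<lambda>h. c)"
  unfolding polynomial_on_def by (blast intro: pf_const)

lemma polynomial_on_entry: "i < k \<Longrightarrow> j < m \<Longrightarrow> polynomial_on k m (\<lambda>h. h $$ (i, j))"
  unfolding polynomial_on_def by (blast intro: pf_entry)

lemma polynomial_on_add:
  assumes "polynomial_on k m f" and "polynomial_on k m g"
  shows "polynomial_on k m (\<lambda>h. f h + g h)"
proof -
  obtain p q where "poly_fun k m p" "poly_fun k m q"
    and "\<forall>h\<in>carrier_mat k m. f h = p h" "\<forall>h\<in>carrier_mat k m. g h = q h"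
    using assms unfolding polynomial_on_def by blast
  then show ?thesis unfolding polynomial_on_def by (auto intro!: exI[of _ "\<lambda>h. p h + q h"] pf_add)
qed

lemma polynomial_on_mult:
  assumes "polynomial_on k m f" and "polynomial_on k m g"
  shows "polynomial_on k m (\<lambda>h. f h * g h)"
proof -
  obtain p q where "poly_fun k m p" "poly_fun k m q"
    and "\<forall>h\<in>carrier_mat k m. f h = p h" "\<forall>h\<in>carrier_mat k m. g h = q h"
    using assms unfolding polynomial_on_def by blast
  then show ?thesis unfolding polynomial_on_def by (auto intro!: exI[of _ "\<lambda>h. p h * q h"] pf_mult)
qed

lemma polynomial_on_sum:
  "finite A \<Longrightarrow> (\<And>a. a \<in> A \<Longrightarrow> polynomial_on k m (f a)) \<Longrightarrow> polynomial_on k m (\<lambda>h. \<Sum>a\<in>A. f a h)"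
  by (induction A rule: finite_induct) (simp_all add: polynomial_on_const polynomial_on_add)

lemma polynomial_on_compose:
  assumes f: "polynomial_on k' m' f"
    and \<phi>_carrier: "\<And>h. h \<in> carrier_mat k m \<Longrightarrow> \<phi> h \<in> carrier_mat k' m'"
    and \<phi>_entry: "\<And>i j. i < k' \<Longrightarrow> j < m' \<Longrightarrow> polynomial_on k m (\<lambda>h. \<phi> h $$ (i, j))"
  shows "polynomial_on k m (\<lambda>h. f (\<phi> h))"
proof -
  obtain p where p: "poly_fun k' m' p" and f_eq: "\<forall>h\<in>carrier_mat k' m'. f h = p h"
    using f unfolding polynomial_on_def by blast
  from p have "polynomial_on k m (\<lambda>h. p (\<phi> h))"
    by (induction rule: poly_fun.induct)
      (simp_all add: polynomial_on_const \<phi>_entry polynomial_on_add polynomial_on_mult)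
  then show ?thesis by (rule polynomial_on_cong) (simp add: f_eq \<phi>_carrier)
qed

lemma polynomial_on_kron_one_mat:
  assumes "i < k * n" and "j < m * n"
  shows "polynomial_on k m (\<lambda>h. kron h (1\<^sub>m n) $$ (i, j))"
proof -
  have "0 < n" "i div n < k" "j div n < m"
    using assms by (auto intro!: gr0I simp: less_mult_imp_div_less)
  then have "polynomial_on k m (\<lambda>h. h $$ (i div n, j div n) * (1\<^sub>m n :: 'a mat) $$ (i mod n, j mod n))"
    by (intro polynomial_on_mult polynomial_on_entry polynomial_on_const)
  then show ?thesis by (rule polynomial_on_cong) (use assms in \<open>simp add: index_kron\<close>)
qed

lemma hom_poly_functorD:
  assumes "hom_poly_functor Pdim Pmat d"
  shows hom_poly_functor_carrier:
      "h \<in> carrier_mat k m \<Longrightarrow> Pmat h \<in> carrier_mat (Pdim k) (Pdim m)"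
    and hom_poly_functor_one: "Pmat (1\<^sub>m m) = 1\<^sub>m (Pdim m)"
    and hom_poly_functor_mult:
      "g \<in> carrier_mat k l \<Longrightarrow> h \<in> carrier_mat l m \<Longrightarrow> Pmat (g * h) = Pmat g * Pmat h"
    and hom_poly_functor_entry:
      "i < Pdim k \<Longrightarrow> j < Pdim m \<Longrightarrow> polynomial_on k m (\<lambda>h. Pmat h $$ (i, j))"
    and hom_poly_functor_smult:
      "h \<in> carrier_mat k m \<Longrightarrow> Pmat (c \<cdot>\<^sub>m h) = (c ^ d) \<cdot>\<^sub>m Pmat h"
  using assms unfolding hom_poly_functor_def by simp_all

lemma wedge_mat_carrier:
  "g \<in> carrier_mat n n \<Longrightarrow> wedge_mat d g \<in> carrier_mat (length (wedge_idx n d)) (length (wedge_idx n d))"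
  unfolding wedge_mat_def Let_def carrier_mat_def by simp

lemma Omega_obj_carrier:
  "x \<in> Omega_obj Pdim Pmat n d m \<Longrightarrow> x \<in> carrier_mat (Pdim (m * n)) (length (wedge_idx n d))"
  unfolding Omega_obj_def by simp

context
  fixes Pdim :: "nat \<Rightarrow> nat" and Pmat :: "'a::comm_ring_1 mat \<Rightarrow> 'a mat" and n d :: nat
  assumes P: "hom_poly_functor Pdim Pmat d"
begin

lemma GL_action_carrier:
  "g \<in> carrier_mat n n \<Longrightarrow> Pmat (kron (1\<^sub>m m) g) \<in> carrier_mat (Pdim (m * n)) (Pdim (m * n))"
  by (rule hom_poly_functor_carrier[OF P]) simp

lemma zero_mem_Omega_obj: "0\<^sub>m (Pdim (m * n)) (length (wedge_idx n d)) \<in> Omega_obj Pdim Pmat n d m"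
  unfolding Omega_obj_def
  by (auto simp: GL_action_carrier wedge_mat_carrier
      right_mult_zero_mat[OF GL_action_carrier] left_mult_zero_mat[OF wedge_mat_carrier])

lemma add_mem_Omega_obj:
  assumes x: "x \<in> Omega_obj Pdim Pmat n d m" and y: "y \<in> Omega_obj Pdim Pmat n d m"
  shows "x + y \<in> Omega_obj Pdim Pmat n d m"
proof -
  have "Pmat (kron (1\<^sub>m m) g) * (x + y) = (x + y) * wedge_mat d g"
    if g: "g \<in> carrier_mat n n" "invertible_mat g" for g
    by (rule intertwines_add[OF GL_action_carrier[OF g(1)] wedge_mat_carrier[OF g(1)]])
      (use x y g in \<open>simp_all add: Omega_obj_def\<close>)
  then show ?thesis using x y by (simp add: Omega_obj_def)
qed

lemma smult_mem_Omega_obj: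
  assumes x: "x \<in> Omega_obj Pdim Pmat n d m"
  shows "a \<cdot>\<^sub>m x \<in> Omega_obj Pdim Pmat n d m"
proof -
  have "Pmat (kron (1\<^sub>m m) g) * (a \<cdot>\<^sub>m x) = (a \<cdot>\<^sub>m x) * wedge_mat d g"
    if g: "g \<in> carrier_mat n n" "invertible_mat g" for g
    by (rule intertwines_smult[OF GL_action_carrier[OF g(1)] wedge_mat_carrier[OF g(1)]])
      (use x g in \<open>simp_all add: Omega_obj_def\<close>)
  then show ?thesis using x by (simp add: Omega_obj_def)
qed

lemma Omega_mor_carrier:
  "h \<in> carrier_mat k m \<Longrightarrow> Pmat (kron h (1\<^sub>m n)) \<in> carrier_mat (Pdim (k * n)) (Pdim (m * n))"
  by (rule hom_poly_functor_carrier[OF P]) simp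

lemma GL_action_commute:
  assumes h: "h \<in> carrier_mat k m" and g: "g \<in> carrier_mat n n"
  shows "Pmat (kron (1\<^sub>m k) g) * Pmat (kron h (1\<^sub>m n)) = Pmat (kron h (1\<^sub>m n)) * Pmat (kron (1\<^sub>m m) g)"
proof -
  have "Pmat (kron (1\<^sub>m k) g) * Pmat (kron h (1\<^sub>m n)) = Pmat (kron (1\<^sub>m k) g * kron h (1\<^sub>m n))"
    by (rule hom_poly_functor_mult[OF P kron_carrier_mat[OF one_carrier_mat g]
          kron_carrier_mat[OF h one_carrier_mat], symmetric])
  also have "\<dots> = Pmat (kron h (1\<^sub>m n) * kron (1\<^sub>m m) g)"
    by (simp add: kron_one_mat_commute[OF h g])
  also have "\<dots> = Pmat (kron h (1\<^sub>m n)) * Pmat (kron (1\<^sub>m m) g)"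
    by (rule hom_poly_functor_mult[OF P kron_carrier_mat[OF h one_carrier_mat]
          kron_carrier_mat[OF one_carrier_mat g]])
  finally show ?thesis .
qed

lemma Omega_mor_mem:
  assumes h: "h \<in> carrier_mat k m" and x: "x \<in> Omega_obj Pdim Pmat n d m"
  shows "Omega_mor Pmat n h x \<in> Omega_obj Pdim Pmat n d k"
proof -
  note xc = Omega_obj_carrier[OF x]
  have "Pmat (kron (1\<^sub>m k) g) * (Pmat (kron h (1\<^sub>m n)) * x) = Pmat (kron h (1\<^sub>m n)) * x * wedge_mat d g"
    if g: "g \<in> carrier_mat n n" and "invertible_mat g" for g
  proof -
    have equivariant: "Pmat (kron (1\<^sub>m m) g) * x = x * wedge_mat d g"
      using x g \<open>invertible_mat g\<close> by (simp add: Omega_obj_def)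
    have "Pmat (kron (1\<^sub>m k) g) * (Pmat (kron h (1\<^sub>m n)) * x) =
        Pmat (kron (1\<^sub>m k) g) * Pmat (kron h (1\<^sub>m n)) * x"
      by (rule assoc_mult_mat[OF GL_action_carrier[OF g] Omega_mor_carrier[OF h] xc, symmetric])
    also have "\<dots> = Pmat (kron h (1\<^sub>m n)) * (Pmat (kron (1\<^sub>m m) g) * x)"
      unfolding GL_action_commute[OF h g]
      by (rule assoc_mult_mat[OF Omega_mor_carrier[OF h] GL_action_carrier[OF g] xc])
    also have "\<dots> = Pmat (kron h (1\<^sub>m n)) * x * wedge_mat d g"
      unfolding equivariant
      by (rule assoc_mult_mat[OF Omega_mor_carrier[OF h] xc wedge_mat_carrier[OF g], symmetric])
    finally show ?thesis .
  qed
  moreover have "Pmat (kron h (1\<^sub>m n)) * x \<in> carrier_mat (Pdim (k * n)) (length (wedge_idx n d))"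
    using Omega_mor_carrier[OF h] xc by simp
  ultimately show ?thesis by (simp add: Omega_obj_def Omega_mor_def)
qed

lemma Omega_mor_add:
  assumes "h \<in> carrier_mat k m" "x \<in> Omega_obj Pdim Pmat n d m" "y \<in> Omega_obj Pdim Pmat n d m"
  shows "Omega_mor Pmat n h (x + y) = Omega_mor Pmat n h x + Omega_mor Pmat n h y"
  unfolding Omega_mor_def
  by (rule mult_add_distrib_mat[OF Omega_mor_carrier[OF assms(1)]])
    (rule Omega_obj_carrier, fact)+

lemma Omega_mor_smult:
  assumes "h \<in> carrier_mat k m" "x \<in> Omega_obj Pdim Pmat n d m"
  shows "Omega_mor Pmat n h (a \<cdot>\<^sub>m x) = a \<cdot>\<^sub>m Omega_mor Pmat n h x"
  unfolding Omega_mor_def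
  by (rule mult_smult_distrib[OF Omega_mor_carrier[OF assms(1)]])
    (rule Omega_obj_carrier, fact)

lemma Omega_mor_one:
  assumes "x \<in> Omega_obj Pdim Pmat n d m"
  shows "Omega_mor Pmat n (1\<^sub>m m) x = x"
  unfolding Omega_mor_def kron_one_mat hom_poly_functor_one[OF P]
  by (rule left_mult_one_mat[OF Omega_obj_carrier[OF assms]])

lemma Omega_mor_mult:
  assumes g: "g \<in> carrier_mat k l" and h: "h \<in> carrier_mat l m" and x: "x \<in> Omega_obj Pdim Pmat n d m"
  shows "Omega_mor Pmat n (g * h) x = Omega_mor Pmat n g (Omega_mor Pmat n h x)"
proof -
  have "Pmat (kron (g * h) (1\<^sub>m n)) = Pmat (kron g (1\<^sub>m n) * kron h (1\<^sub>m n))"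
    using kron_mult[OF g one_carrier_mat h one_carrier_mat] by simp
  also have "\<dots> = Pmat (kron g (1\<^sub>m n)) * Pmat (kron h (1\<^sub>m n))"
    by (rule hom_poly_functor_mult[OF P kron_carrier_mat[OF g one_carrier_mat]
          kron_carrier_mat[OF h one_carrier_mat]])
  finally show ?thesis
    unfolding Omega_mor_def
    by (simp add: assoc_mult_mat[OF Omega_mor_carrier[OF g] Omega_mor_carrier[OF h] Omega_obj_carrier[OF x]])
qed

lemma Omega_mor_entry_polynomial:
  assumes x: "x \<in> Omega_obj Pdim Pmat n d m" and i: "i < Pdim (k * n)" and j: "j < length (wedge_idx n d)"
  shows "polynomial_on k m (\<lambda>h. Omega_mor Pmat n h x $$ (i, j))"
proof -
  note xc = Omega_obj_carrier[OF x]
  have "polynomial_on k m (\<lambda>h. Pmat (kron h (1\<^sub>m n)) $$ (i, l))" if "l < Pdim (m * n)" for l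
    using hom_poly_functor_entry[OF P i that]
    by (rule polynomial_on_compose) (auto intro: polynomial_on_kron_one_mat)
  then have "polynomial_on k m
      (\<lambda>h. \<Sum>l\<in>{0..<Pdim (m * n)}. Pmat (kron h (1\<^sub>m n)) $$ (i, l) * x $$ (l, j))"
    by (intro polynomial_on_sum polynomial_on_mult polynomial_on_const) auto
  then show ?thesis
  proof (rule polynomial_on_cong)
    fix h :: "'a mat" assume h: "h \<in> carrier_mat k m"
    show "(\<Sum>l\<in>{0..<Pdim (m * n)}. Pmat (kron h (1\<^sub>m n)) $$ (i, l) * x $$ (l, j)) =
        Omega_mor Pmat n h x $$ (i, j)"
      using Omega_mor_carrier[OF h] xc i j by (simp add: Omega_mor_def scalar_prod_def)
  qed
qed

lemma Omega_mor_homogeneous: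
  assumes h: "h \<in> carrier_mat k m" and x: "x \<in> Omega_obj Pdim Pmat n d m"
  shows "Omega_mor Pmat n (c \<cdot>\<^sub>m h) x = (c ^ d) \<cdot>\<^sub>m Omega_mor Pmat n h x"
  unfolding Omega_mor_def kron_smult_left hom_poly_functor_smult[OF P kron_carrier_mat[OF h one_carrier_mat]]
  by (rule mult_smult_assoc_mat[OF Omega_mor_carrier[OF h]]) (rule Omega_obj_carrier[OF x])

end

theorem mainTheorem9:
  fixes Pdim :: "nat \<Rightarrow> nat" and Pmat :: "'a::field_char_0 mat \<Rightarrow> 'a mat" and n d :: nat
  assumes "hom_poly_functor Pdim Pmat d"
    and "d \<le> n"
  shows "hom_poly_subfunctor (\<lambda>m. Pdim (m * n)) (\<lambda>m. length (wedge_idx n d))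
           (Omega_obj Pdim Pmat n d) (Omega_mor Pmat n) d"
proof -
  note laws = zero_mem_Omega_obj add_mem_Omega_obj smult_mem_Omega_obj
    Omega_mor_mem Omega_mor_add Omega_mor_smult Omega_mor_one Omega_mor_mult
    Omega_mor_entry_polynomial Omega_mor_homogeneous
  show ?thesis
    unfolding hom_poly_subfunctor_def
    by (intro conjI allI impI ballI) (simp_all add: subsetI Omega_obj_carrier laws[OF assms(1)])
qed

end
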